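(* Let $\mathcal{T}=(V,A,E,f,q)$ be a decorated tree, let $v,v'\in V\cup A_0$ be distinct, and suppose the path $\gamma=\gamma_{v,v'}=(x_0,\dots,x_n)$ (so $x_0=v$, $x_n=v'$, $n>0$) is linear. Let $e_1=\{x_0,x_1\}$ and $e_n=\{x_{n-1},x_n\}$. Then $$q(e_1,v)\,N_{v'}-Q(e_n,v')\,N_v=\det(\gamma)\,p(v,e_1),$$ where $\det(\gamma)=q(e_1,x_0)q(e_n,x_n)-Q(e_1,x_0)Q(e_n,x_n)$.
   Context: A graph is a pair $(X_0,X_1)$ of finite sets such that each element of $X_1$ (an edge) is a $2$-element subset of $X_0$; elements of $X_0$ are cells. The valency $\delta_x$ of a cell is the number of edges containing it. A path is a tuple $(x_0,\dots,x_n)$ ($n\ge0$) of cells with $\{x_i,x_{i+1}\}$ an edge for each $i<n$, these edges pairwise distinct; a cell/edge is in the path if it is some $x_i$ / some $\{x_i,x_{i+1}\}$. The graph is a tree if any two cells $x,y$ are joined by a unique path $\gamma_{x,y}$. A decorated tree is $(V,A,E,f,q)$ with $V$ (vertices), $A$ (arrows) finite disjoint sets, $(V\cup A,E)$ a tree, every arrow of valency $1$, $f:A\to\mathbb{Z}$, $q(e,x)\in\mathbb{Z}$ for each $e\in E$, $x\in e$, with $q(e,\alpha)=1$ for $\alpha\in A$, and for each $v\in V$ and distinct edges $e,e'\ni v$, $\gcd(q(e,v),q(e',v))=1$. $A_0=\{\alpha\in A:f(\alpha)=0\}$. For $x\in V\cup A$, $e\ni x$: $Q(e,x)=\prod q(e',x)$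 over edges $e'\ne e$ containing $x$ (empty product $=1$). An edge $\varepsilon$ is incident to a path $\gamma$ if it is not in $\gamma$ but contains a cell $u$ of $\gamma$; $q(\varepsilon,\gamma):=q(\varepsilon,u)$. For $v\ne\alpha$, $v\in V\cup A$, $\alpha\in A$: $x_{v,\alpha}=f(\alpha)\prod_\varepsilon q(\varepsilon,\gamma_{v,\alpha})$ over edges incident to $\gamma_{v,\alpha}$; $\hat x_{v,\alpha}$ the same with product restricted to $\varepsilon\not\ni v$. For $v\in V\cup A_0$, $N_v=\sum_{\alpha\in A\setminus A_0}x_{v,\alpha}$. For $u\in V\cup A$, $e\ni u$: $p(u,e)=\sum\hat x_{u,\alpha}$ over $\alpha\in A\setminus A_0$ with $e$ in $\gamma_{u,\alpha}$. A path $(x_0,\dots,x_n)$ with $n>0$ is linear if $\delta_{x_i}=2$ for all $0<i<n$. *)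

theory Defs
  imports Main
begin

definition is_graph :: "'a set \<Rightarrow> 'a set set \<Rightarrow> bool" where
  "is_graph X E \<longleftrightarrow> finite X \<and> finite E \<and> (\<forall>e\<in>E. e \<subseteq> X \<and> card e = 2)"

definition valency :: "'a set set \<Rightarrow> 'a \<Rightarrow> nat" where
  "valency E x = card {e \<in> E. x \<in> e}"

definition path_edge_list :: "'a list \<Rightarrow> 'a set list" where
  "path_edge_list p = map (\<lambda>i. {p ! i, p ! Suc i}) [0..<length p - 1]"

definition path_edges :: "'a list \<Rightarrow> 'a set set" where
  "path_edges p = set (path_edge_list p)"

definition is_path :: "'a set \<Rightarrow> 'a set set \<Rightarrow> 'a list \<Rightarrow> bool" where
  "is_path X E p \<longleftrightarrow> p \<noteq> [] \<and> set p \<subseteq> X \<and> set (path_edge_list p) \<subseteq> E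
      \<and> distinct (path_edge_list p)"

definition is_tree :: "'a set \<Rightarrow> 'a set set \<Rightarrow> bool" where
  "is_tree X E \<longleftrightarrow> is_graph X E \<and>
     (\<forall>x\<in>X. \<forall>y\<in>X. \<exists>!p. is_path X E p \<and> hd p = x \<and> last p = y)"

definition gam :: "'a set \<Rightarrow> 'a set set \<Rightarrow> 'a \<Rightarrow> 'a \<Rightarrow> 'a list" where
  "gam X E x y = (THE p. is_path X E p \<and> hd p = x \<and> last p = y)"

definition decorated_tree ::
  "'a set \<Rightarrow> 'a set \<Rightarrow> 'a set set \<Rightarrow> ('a \<Rightarrow> int) \<Rightarrow> ('a set \<Rightarrow> 'a \<Rightarrow> int) \<Rightarrow> bool" where
  "decorated_tree V A E f q \<longleftrightarrow>
     finite V \<and> finite A \<and> V \<inter> A = {} \<and> is_tree (V \<union> A) E \<and>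
     (\<forall>\<alpha>\<in>A. valency E \<alpha> = 1) \<and>
     (\<forall>e\<in>E. \<forall>\<alpha>\<in>A. \<alpha> \<in> e \<longrightarrow> q e \<alpha> = 1) \<and>
     (\<forall>v\<in>V. \<forall>e\<in>E. \<forall>e'\<in>E. v \<in> e \<and> v \<in> e' \<and> e \<noteq> e' \<longrightarrow> gcd (q e v) (q e' v) = 1)"

definition A0 :: "'a set \<Rightarrow> ('a \<Rightarrow> int) \<Rightarrow> 'a set" where
  "A0 A f = {\<alpha> \<in> A. f \<alpha> = 0}"

definition QQ :: "'a set set \<Rightarrow> ('a set \<Rightarrow> 'a \<Rightarrow> int) \<Rightarrow> 'a set \<Rightarrow> 'a \<Rightarrow> int" where
  "QQ E q e x = (\<Prod>e'\<in>{e' \<in> E. x \<in> e' \<and> e' \<noteq> e}. q e' x)"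

definition incident_edges :: "'a set set \<Rightarrow> 'a list \<Rightarrow> 'a set set" where
  "incident_edges E p = {\<epsilon> \<in> E. \<epsilon> \<notin> path_edges p \<and> \<epsilon> \<inter> set p \<noteq> {}}"

definition q_path :: "('a set \<Rightarrow> 'a \<Rightarrow> int) \<Rightarrow> 'a set \<Rightarrow> 'a list \<Rightarrow> int" where
  "q_path q \<epsilon> p = q \<epsilon> (THE u. u \<in> \<epsilon> \<and> u \<in> set p)"

definition xx :: "'a set \<Rightarrow> 'a set \<Rightarrow> 'a set set \<Rightarrow> ('a \<Rightarrow> int) \<Rightarrow> ('a set \<Rightarrow> 'a \<Rightarrow> int)
    \<Rightarrow> 'a \<Rightarrow> 'a \<Rightarrow> int" where
  "xx V A E f q v \<alpha> = (let g = gam (V \<union> A) E v \<alpha> in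
      f \<alpha> * (\<Prod>\<epsilon>\<in>incident_edges E g. q_path q \<epsilon> g))"

definition xx_hat :: "'a set \<Rightarrow> 'a set \<Rightarrow> 'a set set \<Rightarrow> ('a \<Rightarrow> int) \<Rightarrow> ('a set \<Rightarrow> 'a \<Rightarrow> int)
    \<Rightarrow> 'a \<Rightarrow> 'a \<Rightarrow> int" where
  "xx_hat V A E f q v \<alpha> = (let g = gam (V \<union> A) E v \<alpha> in
      f \<alpha> * (\<Prod>\<epsilon>\<in>{\<epsilon> \<in> incident_edges E g. v \<notin> \<epsilon>}. q_path q \<epsilon> g))"

definition NN :: "'a set \<Rightarrow> 'a set \<Rightarrow> 'a set set \<Rightarrow> ('a \<Rightarrow> int) \<Rightarrow> ('a set \<Rightarrow> 'a \<Rightarrow> int)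
    \<Rightarrow> 'a \<Rightarrow> int" where
  "NN V A E f q v = (\<Sum>\<alpha>\<in>A - A0 A f. xx V A E f q v \<alpha>)"

definition pp :: "'a set \<Rightarrow> 'a set \<Rightarrow> 'a set set \<Rightarrow> ('a \<Rightarrow> int) \<Rightarrow> ('a set \<Rightarrow> 'a \<Rightarrow> int)
    \<Rightarrow> 'a \<Rightarrow> 'a set \<Rightarrow> int" where
  "pp V A E f q u e = (\<Sum>\<alpha>\<in>{\<alpha> \<in> A - A0 A f. e \<in> path_edges (gam (V \<union> A) E u \<alpha>)}.
      xx_hat V A E f q u \<alpha>)"

definition linear_path :: "'a set set \<Rightarrow> 'a list \<Rightarrow> bool" where
  "linear_path E p \<longleftrightarrow> length p > 1 \<and> (\<forall>i. 0 < i \<and> i < length p - 1 \<longrightarrow> valency E (p ! i) = 2)"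

definition det_path :: "'a set set \<Rightarrow> ('a set \<Rightarrow> 'a \<Rightarrow> int) \<Rightarrow> 'a list \<Rightarrow> int" where
  "det_path E q p = (let n = length p - 1; e1 = {p ! 0, p ! 1}; en = {p ! (n - 1), p ! n} in
      q e1 (p ! 0) * q en (p ! n) - QQ E q e1 (p ! 0) * QQ E q en (p ! n))"

end

theory Submission
  imports Defs
begin

text \<open>Every arrow \<open>\<alpha>\<close> with \<open>f \<alpha> \<noteq> 0\<close> lies off \<open>\<gamma>\<close>, as arrows have valency 1 and the
  interior cells of \<open>\<gamma>\<close> valency 2. Since the interior cells of \<open>\<gamma>\<close> have no edges besides those
  of \<open>\<gamma>\<close>, one of the paths \<open>\<gamma>\<^sub>v\<^sub>\<alpha>\<close>, \<open>\<gamma>\<^sub>v\<^sub>'\<^sub>\<alpha>\<close> runs through all of \<open>\<gamma>\<close> and then continues as the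
  other one, so the products \<open>x\<^sub>v\<^sub>\<alpha>\<close> and \<open>x\<^sub>v\<^sub>'\<^sub>\<alpha>\<close> share all factors except those at \<open>v\<close> and
  \<open>v'\<close>. If \<open>\<gamma>\<^sub>v\<^sub>\<alpha>\<close> is the longer path (equivalently, \<open>e\<^sub>1\<close> lies on it), they are
  \<open>Q(e\<^sub>1,v) R\<close> and \<open>q(e\<^sub>n,v') R\<close> with \<open>R\<close> the hatted product, so the \<open>\<alpha>\<close>-term of the left-hand
  side is \<open>det(\<gamma>) R\<close>; otherwise they are \<open>q(e\<^sub>1,v) R'\<close> and \<open>Q(e\<^sub>n,v') R'\<close> and the term vanishes.\<close>

subsection \<open>Edge lists of tuples of cells\<close>

lemma path_edge_list_Nil [simp]: "path_edge_list [] = []"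
  by (simp add: path_edge_list_def)

lemma path_edge_list_singleton [simp]: "path_edge_list [x] = []"
  by (simp add: path_edge_list_def)

lemma path_edge_list_Cons_Cons [simp]:
  "path_edge_list (x # y # p) = {x, y} # path_edge_list (y # p)"
  unfolding path_edge_list_def
  by (simp add: upt_conv_Cons map_Suc_upt[symmetric] del: upt_Suc)

lemma path_edge_list_append:
  "path_edge_list (p @ x # r) = path_edge_list (p @ [x]) @ path_edge_list (x # r)"
proof (induction p)
  case (Cons a p)
  then show ?case by (cases p) auto
qed simp

lemma path_edge_list_butlast_append:
  assumes "p \<noteq> []" "r \<noteq> []" "last p = hd r"
  shows "path_edge_list (butlast p @ r) = path_edge_list p @ path_edge_list r"
proof -
  obtain r' where r: "r = last p # r'" using assms(2,3) by (cases r) auto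
  have "butlast p @ [last p] = p" using assms(1) by simp
  then show ?thesis unfolding r using path_edge_list_append[of "butlast p" "last p" r'] by simp
qed

lemma path_edge_list_rev: "path_edge_list (rev p) = rev (path_edge_list p)"
proof (induction p rule: induct_list012)
  case (3 x y p)
  have "path_edge_list (rev (x # y # p)) = path_edge_list (rev p @ [y]) @ [{y, x}]"
    using path_edge_list_append[of "rev p" y "[x]"] by simp
  then show ?case using "3.IH"(2) by (simp add: insert_commute)
qed simp_all

lemma set_butlast_append:
  assumes "p \<noteq> []" "r \<noteq> []" "last p = hd r"
  shows "set (butlast p @ r) = set p \<union> set r"
proof -
  have "butlast p @ r = butlast p @ last p # tl r" using assms by simp
  moreover have "set p = set (butlast p @ [last p])" using assms(1) by simp
  moreover have "set r = insert (hd r) (set (tl r))" using assms(2) by (cases r) auto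
  ultimately show ?thesis using assms by auto
qed

lemma path_edge_list_subset: "e \<in> set (path_edge_list p) \<Longrightarrow> e \<subseteq> set p"
  unfolding path_edge_list_def by auto

lemma in_path_edge_list_conv_nth:
  "e \<in> set (path_edge_list p) \<longleftrightarrow> (\<exists>i. Suc i < length p \<and> e = {p ! i, p ! Suc i})"
  unfolding path_edge_list_def by force

lemma path_edge_list_meets_tl: "e \<in> set (path_edge_list p) \<Longrightarrow> e \<inter> set (tl p) \<noteq> {}"
  by (cases p) (auto simp: in_path_edge_list_conv_nth)

lemma path_edge_list_eq_Nil_iff: "path_edge_list p = [] \<longleftrightarrow> length p < 2"
  unfolding path_edge_list_def by auto

lemma hd_path_edge_list: "length p \<ge> 2 \<Longrightarrow> hd (path_edge_list p) = {p ! 0, p ! 1}"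
  unfolding path_edge_list_def by (simp add: hd_map)

lemma last_path_edge_list:
  "length p \<ge> 2 \<Longrightarrow> last (path_edge_list p) = {p ! (length p - 2), p ! (length p - 1)}"
  unfolding path_edge_list_def by (simp add: last_map Suc_diff_Suc numeral_2_eq_2)

lemma path_edge_list_ends:
  assumes "length p \<ge> 2"
  shows "hd (path_edge_list p) \<in> set (path_edge_list p)" "last (path_edge_list p) \<in> set (path_edge_list p)"
    and "hd p \<in> hd (path_edge_list p)" "last p \<in> last (path_edge_list p)"
proof -
  have "path_edge_list p \<noteq> []" using assms by (simp add: path_edge_list_eq_Nil_iff)
  then show "hd (path_edge_list p) \<in> set (path_edge_list p)" "last (path_edge_list p) \<in> set (path_edge_list p)"
    by simp_all
  have "p \<noteq> []" using assms by auto
  then show "hd p \<in> hd (path_edge_list p)" "last p \<in> last (path_edge_list p)"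
    using hd_path_edge_list[OF assms] last_path_edge_list[OF assms]
    by (simp_all add: hd_conv_nth last_conv_nth)
qed

lemma path_edge_list_at_hd:
  assumes "distinct p" "e \<in> set (path_edge_list p)" "hd p \<in> e"
  shows "e = hd (path_edge_list p)"
proof -
  obtain x y r where p: "p = x # y # r"
    using assms(2) by (cases p; cases "tl p") auto
  have "x \<notin> set (y # r)" using assms(1) p by simp
  then show ?thesis using assms(2,3) p path_edge_list_subset by fastforce
qed

lemma path_edge_list_at_last:
  assumes "distinct p" "e \<in> set (path_edge_list p)" "last p \<in> e"
  shows "e = last (path_edge_list p)"
  using path_edge_list_at_hd[of "rev p" e] assms
  by (auto simp: path_edge_list_rev hd_rev)

subsection \<open>Paths in trees\<close>

lemma is_path_append_iff:
  "is_path X E (p @ x # r) \<longleftrightarrow> is_path X E (p @ [x]) \<and> is_path X E (x # r) \<and>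
     set (path_edge_list (p @ [x])) \<inter> set (path_edge_list (x # r)) = {}"
  unfolding is_path_def path_edge_list_append[of p x r] by auto

lemma is_path_rev: "is_path X E p \<Longrightarrow> is_path X E (rev p)"
  unfolding is_path_def by (simp add: path_edge_list_rev)

lemma is_path_butlast_append:
  assumes "is_path X E p" "is_path X E r" "last p = hd r" "set p \<inter> set (tl r) = {}"
  shows "is_path X E (butlast p @ r)"
proof -
  have ne: "p \<noteq> []" "r \<noteq> []" using assms(1,2) unfolding is_path_def by auto
  have "set (path_edge_list p) \<inter> set (path_edge_list r) = {}"
    using path_edge_list_subset[of _ p] path_edge_list_meets_tl[of _ r] assms(4) by fastforce
  then show ?thesis
    using assms(1,2) path_edge_list_butlast_append[OF ne assms(3)] set_butlast_append[OF ne assms(3)]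
    unfolding is_path_def by auto
qed

lemma tree_path_unique:
  assumes "is_tree X E" "is_path X E p" "is_path X E p'" "hd p = hd p'" "last p = last p'"
  shows "p = p'"
proof -
  have "hd p \<in> X" "last p \<in> X"
    using assms(2) unfolding is_path_def by auto
  then show ?thesis using assms unfolding is_tree_def by metis
qed

lemma is_path_gam:
  assumes "is_tree X E" "x \<in> X" "y \<in> X"
  shows "is_path X E (gam X E x y)" "hd (gam X E x y) = x" "last (gam X E x y) = y"
proof -
  have "\<exists>!p. is_path X E p \<and> hd p = x \<and> last p = y" using assms unfolding is_tree_def by blast
  from theI'[OF this] show "is_path X E (gam X E x y)" "hd (gam X E x y) = x" "last (gam X E x y) = y"
    unfolding gam_def by auto
qed

lemma gam_eqI:
  assumes "is_tree X E" "is_path X E p"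
  shows "gam X E (hd p) (last p) = p"
proof -
  have "hd p \<in> X" "last p \<in> X" using assms(2) unfolding is_path_def by auto
  then show ?thesis using tree_path_unique[OF assms(1) is_path_gam(1) assms(2)] is_path_gam assms(1)
    by metis
qed

lemma tree_path_distinct:
  assumes T: "is_tree X E" and P: "is_path X E p"
  shows "distinct p"
proof (rule ccontr)
  assume "\<not> distinct p"
  then obtain xs y ys zs where p: "p = xs @ [y] @ ys @ [y] @ zs" using not_distinct_decomp by blast
  have "is_path X E (xs @ [y])" "is_path X E (y # ys @ y # zs)"
    and disj: "set (path_edge_list (xs @ [y])) \<inter> set (path_edge_list (y # ys @ y # zs)) = {}"
    using P[unfolded p] is_path_append_iff[of X E xs y "ys @ y # zs"] by auto
  moreover have "is_path X E (y # zs)"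
    using \<open>is_path X E (y # ys @ y # zs)\<close> is_path_append_iff[of X E "y # ys" y zs] by auto
  moreover have "set (path_edge_list (y # zs)) \<subseteq> set (path_edge_list (y # ys @ y # zs))"
    using path_edge_list_append[of "y # ys" y zs] by auto
  ultimately have "is_path X E (xs @ y # zs)" using is_path_append_iff[of X E xs y zs] by blast
  moreover have "hd (xs @ y # zs) = hd p" "last (xs @ y # zs) = last p"
    unfolding p by (cases xs; simp) (cases zs; simp)
  ultimately have "xs @ y # zs = p" using tree_path_unique[OF T _ P] by blast
  then show False unfolding p by simp
qed

text \<open>If the path ran from \<open>a\<close> to \<open>b\<close> through further cells, cutting them out and using the edge
  \<open>{a, b}\<close> would give a second path with the same ends.\<close>

lemma tree_path_chord_ordered:
  assumes T: "is_tree X E" and P: "is_path X E p" and p: "p = xs @ a # m @ b # zs"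
    and ab: "{a, b} \<in> E"
  shows "{a, b} \<in> set (path_edge_list p)"
proof (rule ccontr)
  assume ab_notin: "{a, b} \<notin> set (path_edge_list p)"
  have pel_p: "path_edge_list p = path_edge_list (xs @ [a]) @ path_edge_list (a # m @ b # zs)"
    unfolding p by (rule path_edge_list_append)
  have "is_path X E (xs @ [a])" "is_path X E (a # m @ b # zs)"
    and disj: "set (path_edge_list (xs @ [a])) \<inter> set (path_edge_list (a # m @ b # zs)) = {}"
    using P[unfolded p] is_path_append_iff[of X E xs a "m @ b # zs"] by auto
  have bzs: "is_path X E (b # zs)"
    using \<open>is_path X E (a # m @ b # zs)\<close> is_path_append_iff[of X E "a # m" b zs] by auto
  have sub: "set (path_edge_list (b # zs)) \<subseteq> set (path_edge_list (a # m @ b # zs))"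
    using path_edge_list_append[of "a # m" b zs] by auto
  have "is_path X E [a, b]" using P ab unfolding is_path_def p by simp
  then have "is_path X E (a # b # zs)"
    using is_path_append_iff[of X E "[a]" b zs] bzs sub ab_notin pel_p by auto
  then have "is_path X E (xs @ a # b # zs)"
    using is_path_append_iff[of X E xs a "b # zs"] \<open>is_path X E (xs @ [a])\<close> disj sub ab_notin pel_p
    by auto
  moreover have "hd (xs @ a # b # zs) = hd p" "last (xs @ a # b # zs) = last p"
    unfolding p by (cases xs; simp) (cases zs; simp)
  ultimately have "xs @ a # b # zs = p" using tree_path_unique[OF T _ P] by blast
  then show False using ab_notin pel_p unfolding p by simp
qed

lemma tree_path_chord:
  assumes T: "is_tree X E" and P: "is_path X E p"
    and e: "e \<in> E" "a \<in> e" "b \<in> e" "a \<noteq> b" and ab: "a \<in> set p" "b \<in> set p"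
  shows "e \<in> set (path_edge_list p)"
proof -
  have "card e = 2" using T e(1) unfolding is_tree_def is_graph_def by blast
  then have e_eq: "e = {a, b}" using e by (metis card_2_iff doubleton_eq_iff insertE singletonD)
  obtain xs ys where p: "p = xs @ a # ys" using ab(1) split_list by metis
  then consider "b \<in> set ys" | "b \<in> set xs" using ab(2) e(4) by auto
  then show ?thesis
  proof cases
    case 1
    then obtain m zs where "ys = m @ b # zs" using split_list by metis
    then show ?thesis using tree_path_chord_ordered[OF T P, of xs a m b zs] p e(1) e_eq by simp
  next
    case 2
    then obtain xs' m where "xs = xs' @ b # m" using split_list by metis
    then show ?thesis using tree_path_chord_ordered[OF T P, of xs' b m a ys] p e(1) e_eq
      by (simp add: insert_commute)
  qed
qed

lemma q_path_eq:
  assumes "is_tree X E" "is_path X E g" "e \<in> incident_edges E g" "u \<in> e" "u \<in> set g"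
  shows "q_path q e g = q e u"
proof -
  have "u' = u" if "u' \<in> e" "u' \<in> set g" for u'
    using tree_path_chord[OF assms(1,2), of e u' u] that assms(3-5)
    unfolding incident_edges_def path_edges_def by blast
  then have "(THE u. u \<in> e \<and> u \<in> set g) = u" using assms(4,5) by blast
  then show ?thesis unfolding q_path_def by simp
qed

lemma q_path_eq_subpath:
  assumes "is_tree X E" "is_path X E g" "is_path X E h" "set h \<subseteq> set g"
    and "e \<in> incident_edges E g" "e \<in> incident_edges E h"
  shows "q_path q e g = q_path q e h"
proof -
  obtain u where "u \<in> e" "u \<in> set h" using assms(6) unfolding incident_edges_def by auto
  then show ?thesis using q_path_eq[OF assms(1,2,5)] q_path_eq[OF assms(1,3,6)] assms(4) by auto
qed

subsection \<open>Linear paths\<close>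

lemma linear_path_valency:
  assumes "linear_path E p" "z \<in> set p" "z \<noteq> hd p" "z \<noteq> last p"
  shows "valency E z = 2"
proof -
  obtain i where i: "i < length p" "p ! i = z" using assms(2) by (metis in_set_conv_nth)
  have "p \<noteq> []" using assms(2) by auto
  then have "i \<noteq> 0" "i \<noteq> length p - 1"
    using i assms(3,4) hd_conv_nth[of p] last_conv_nth[of p] by metis+
  then show ?thesis using assms(1) i unfolding linear_path_def by auto
qed

lemma linear_path_rev:
  assumes "linear_path E p"
  shows "linear_path E (rev p)"
  unfolding linear_path_def
proof (intro conjI allI impI)
  show "length (rev p) > 1" using assms unfolding linear_path_def by simp
  fix i assume i: "0 < i \<and> i < length (rev p) - 1"
  then have "rev p ! i = p ! (length p - 1 - i)" "0 < length p - 1 - i" "length p - 1 - i < length p - 1"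
    by (auto simp: rev_nth)
  then show "valency E (rev p ! i) = 2" using assms unfolding linear_path_def by metis
qed

lemma linear_path_interior_edge:
  assumes T: "is_tree X E" and P: "is_path X E p" and L: "linear_path E p"
    and z: "z \<in> set p" "z \<noteq> hd p" "z \<noteq> last p" and e: "e \<in> E" "z \<in> e"
  shows "e \<in> set (path_edge_list p)"
proof -
  obtain p1 p3 where p: "p = p1 @ z # p3" using z(1) split_list by metis
  obtain p1' w1 where p1: "p1 = p1' @ [w1]" using z(2) p by (cases p1 rule: rev_cases) auto
  obtain w2 p3' where p3: "p3 = w2 # p3'" using z(3) p by (cases p3) auto
  have pel_p: "path_edge_list p = path_edge_list (p1' @ [w1]) @ {w1, z} # {z, w2} # path_edge_list (w2 # p3')"
    unfolding p p1 p3 using path_edge_list_append[of p1' w1 "z # w2 # p3'"] by simp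
  have "w1 \<noteq> w2" using tree_path_distinct[OF T P] unfolding p p1 p3 by auto
  then have "{w1, z} \<noteq> {z, w2}" by (auto simp: doubleton_eq_iff)
  then have two: "card {{w1, z}, {z, w2}} = 2" by simp
  have "{{w1, z}, {z, w2}} \<subseteq> {e \<in> E. z \<in> e}" using P pel_p unfolding is_path_def by auto
  moreover have "finite E" using T unfolding is_tree_def is_graph_def by simp
  ultimately have "{{w1, z}, {z, w2}} = {e \<in> E. z \<in> e}"
    using linear_path_valency[OF L z] two unfolding valency_def by (intro card_subset_eq) auto
  then show ?thesis using e pel_p by auto
qed

text \<open>The last cell of \<open>gam X E (hd c) \<alpha>\<close> on \<open>c\<close> is an end of \<open>c\<close>: the next edge of that path
  leaves \<open>c\<close>, and interior cells of \<open>c\<close> have no such edge.\<close>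

lemma tree_linear_path_exit:
  assumes T: "is_tree X E" and P: "is_path X E c" and L: "linear_path E c"
    and \<alpha>: "\<alpha> \<in> X" "\<alpha> \<notin> set c"
  obtains g1 z g2 where "gam X E (hd c) \<alpha> = g1 @ z # g2" "z = hd c \<or> z = last c"
    and "set g2 \<inter> set c = {}"
proof -
  have c_ne: "c \<noteq> []" "hd c \<in> X" using P unfolding is_path_def by auto
  define g where "g = gam X E (hd c) \<alpha>"
  have g: "is_path X E g" "hd g = hd c" "last g = \<alpha>"
    using is_path_gam[OF T c_ne(2) \<alpha>(1)] g_def by auto
  have "hd c \<in> set g" using g(1,2) unfolding is_path_def by (metis hd_in_set)
  then obtain g1 z g2 where g_eq: "g = g1 @ z # g2" and z: "z \<in> set c"
    and g2: "\<forall>u\<in>set g2. u \<notin> set c"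
    using split_list_last_prop[of g "\<lambda>u. u \<in> set c"] c_ne(1) by (metis hd_in_set)
  obtain w g3 where g2_eq: "g2 = w # g3" using g(3) \<alpha>(2) z g_eq by (cases g2) auto
  have "{z, w} \<in> E"
    using g(1) path_edge_list_append[of g1 z g2] unfolding is_path_def g_eq g2_eq by auto
  moreover have "{z, w} \<notin> set (path_edge_list c)"
    using path_edge_list_subset g2 g2_eq by fastforce
  ultimately have "z = hd c \<or> z = last c"
    using linear_path_interior_edge[OF T P L z] by blast
  then show ?thesis using that g_eq g2 unfolding g_def by blast
qed

lemma tree_linear_path_gam_cases:
  assumes T: "is_tree X E" and P: "is_path X E c" and L: "linear_path E c"
    and \<alpha>: "\<alpha> \<in> X" "\<alpha> \<notin> set c"
  obtains "gam X E (hd c) \<alpha> = butlast c @ gam X E (last c) \<alpha>"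
    | "gam X E (last c) \<alpha> = butlast (rev c) @ gam X E (hd c) \<alpha>"
proof -
  have c_ne: "c \<noteq> []" "hd c \<in> X" using P unfolding is_path_def by auto
  define g where "g = gam X E (hd c) \<alpha>"
  have g: "is_path X E g" "hd g = hd c" "last g = \<alpha>"
    using is_path_gam[OF T c_ne(2) \<alpha>(1)] g_def by auto
  obtain g1 z g2 where g_eq: "g = g1 @ z # g2" and z: "z = hd c \<or> z = last c"
    and g2: "set g2 \<inter> set c = {}"
    using tree_linear_path_exit[OF T P L \<alpha>] unfolding g_def by metis
  consider "z = last c" | "z = hd c" "z \<noteq> last c" using z by blast
  then show ?thesis
  proof cases
    case 1
    have "is_path X E (g1 @ [z])" "is_path X E (z # g2)"
      using g(1) is_path_append_iff[of X E g1 z g2] unfolding g_eq by simp_all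
    moreover have "hd (g1 @ [z]) = hd c" using g(2) g_eq by (cases g1) auto
    ultimately have "g1 @ [z] = c" using tree_path_unique[OF T _ P] 1 by simp
    moreover have "gam X E (last c) \<alpha> = z # g2"
      using gam_eqI[OF T \<open>is_path X E (z # g2)\<close>] g(3) 1 unfolding g_eq by simp
    ultimately show ?thesis using that(1) g_def g_eq by (metis butlast_snoc)
  next
    case 2
    have "g = z # g2"
      using tree_path_distinct[OF T g(1)] g(2) 2(1) g_eq by (cases g1) auto
    then have W: "is_path X E (butlast (rev c) @ g)"
      using is_path_butlast_append[OF is_path_rev[OF P] g(1)] g(2) g2 c_ne(1) by (auto simp: last_rev)
    obtain y x r where "rev c = y # x # r"
      using L unfolding linear_path_def by (cases "rev c"; cases "tl (rev c)") auto
    then have "hd (butlast (rev c) @ g) = last c" by (simp flip: hd_rev)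
    moreover have "last (butlast (rev c) @ g) = \<alpha>" using g(3) \<open>g = z # g2\<close> by simp
    ultimately show ?thesis using that(2) gam_eqI[OF T W] unfolding g_def by metis
  qed
qed

context
  fixes X :: "'a set" and E :: "'a set set" and c h :: "'a list"
  assumes tree: "is_tree X E" and c: "is_path X E c" "linear_path E c"
    and h: "is_path X E h" "hd h = last c" and g: "is_path X E (butlast c @ h)"
begin

lemma butlast_append_cells:
  shows "path_edge_list (butlast c @ h) = path_edge_list c @ path_edge_list h"
    and "set (butlast c @ h) = set c \<union> set h"
    and "set c \<inter> set h = {last c}"
    and "hd c \<notin> set h"
proof -
  have ne: "c \<noteq> []" "h \<noteq> []" "last c = hd h" using c(1) h unfolding is_path_def by auto
  show "path_edge_list (butlast c @ h) = path_edge_list c @ path_edge_list h"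
    and "set (butlast c @ h) = set c \<union> set h"
    using path_edge_list_butlast_append[OF ne] set_butlast_append[OF ne] by auto
  have "set (butlast c) \<inter> set h = {}" using tree_path_distinct[OF tree g] by simp
  moreover have "set c = insert (last c) (set (butlast c))" using ne(1) by (cases c rule: rev_cases) simp_all
  moreover have "last c \<in> set h" using ne by simp
  ultimately show ch: "set c \<inter> set h = {last c}" by blast
  have "length c \<ge> 2" using c(2) unfolding linear_path_def by simp
  then have "c ! 0 \<noteq> c ! (length c - 1)"
    using tree_path_distinct[OF tree c(1)] nth_eq_iff_index_eq[of c 0 "length c - 1"] ne(1) by simp
  then have "hd c \<noteq> last c" using ne(1) by (simp add: hd_conv_nth last_conv_nth)
  then show "hd c \<notin> set h" using ch hd_in_set[OF ne(1)] by blast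
qed

lemma butlast_append_incident_edge_at_hd:
  assumes e: "e \<in> incident_edges E h" "hd c \<in> e"
  shows "e = last (path_edge_list c)"
proof -
  obtain u where u: "u \<in> e" "u \<in> set h" using e(1) unfolding incident_edges_def by auto
  have "e \<in> E" "u \<noteq> hd c" "hd c \<in> set (butlast c @ h)" "u \<in> set (butlast c @ h)"
    using e(1) u(2) butlast_append_cells c(1) unfolding incident_edges_def is_path_def by auto
  then have "e \<in> set (path_edge_list (butlast c @ h))"
    using tree_path_chord[OF tree g _ e(2) u(1)] by simp
  then have ec: "e \<in> set (path_edge_list c)"
    using e(1) butlast_append_cells(1) unfolding incident_edges_def path_edges_def by auto
  then have "u = last c" using butlast_append_cells(3) path_edge_list_subset[OF ec] u by auto
  then show ?thesis using path_edge_list_at_last[OF tree_path_distinct[OF tree c(1)] ec] u(1) by blast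
qed

lemma incident_edges_butlast_appendI1:
  assumes "e \<in> E" "hd c \<in> e" "e \<noteq> hd (path_edge_list c)"
  shows "e \<in> incident_edges E (butlast c @ h)"
proof -
  have "e \<notin> set (path_edge_list c)"
    using path_edge_list_at_hd[OF tree_path_distinct[OF tree c(1)]] assms(2,3) by blast
  moreover have "e \<notin> set (path_edge_list h)"
    using path_edge_list_subset[of e h] butlast_append_cells(4) assms(2) by blast
  moreover have "hd c \<in> set (butlast c @ h)"
    using c(1) butlast_append_cells(2) unfolding is_path_def by simp
  ultimately show ?thesis
    using assms butlast_append_cells(1) unfolding incident_edges_def path_edges_def by auto
qed

lemma incident_edges_butlast_appendI2:
  assumes e: "e \<in> incident_edges E h" "e \<noteq> last (path_edge_list c)"
  shows "e \<in> incident_edges E (butlast c @ h)"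
proof -
  obtain u where u: "u \<in> e" "u \<in> set h" using e(1) unfolding incident_edges_def by auto
  have "e \<notin> set (path_edge_list c)"
  proof
    assume ec: "e \<in> set (path_edge_list c)"
    then have "u = last c" using butlast_append_cells(3) path_edge_list_subset[OF ec] u by auto
    then show False
      using path_edge_list_at_last[OF tree_path_distinct[OF tree c(1)] ec] u(1) e(2) by blast
  qed
  then show ?thesis
    using e(1) butlast_append_cells(1,2) unfolding incident_edges_def path_edges_def by auto
qed

lemma incident_edges_butlast_append:
  "incident_edges E (butlast c @ h) =
     {e \<in> E. hd c \<in> e \<and> e \<noteq> hd (path_edge_list c)} \<union>
     (incident_edges E h - {last (path_edge_list c)})"
  (is "_ = ?S1 \<union> ?S2")
proof (intro equalityI subsetI)
  fix e
  assume e: "e \<in> incident_edges E (butlast c @ h)"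
  note cells = butlast_append_cells
  have "length c \<ge> 2" using c(2) unfolding linear_path_def by simp
  note e1_en = path_edge_list_ends(1,2)[OF this]
  obtain u where u: "u \<in> e" "u \<in> set c \<union> set h"
    using e unfolding incident_edges_def cells(2) by auto
  have e_E: "e \<in> E" "e \<notin> set (path_edge_list c)" "e \<notin> set (path_edge_list h)"
    using e cells(1) unfolding incident_edges_def path_edges_def by auto
  consider "u \<in> set h" | "u = hd c" | "u \<in> set c" "u \<noteq> hd c" "u \<noteq> last c"
    using u cells(3) by blast
  then show "e \<in> ?S1 \<union> ?S2"
  proof cases
    case 1
    then show ?thesis using e_E u e1_en unfolding incident_edges_def path_edges_def by auto
  next
    case 2
    then show ?thesis using e_E u e1_en by auto
  next
    case 3
    then show ?thesis using linear_path_interior_edge[OF tree c 3 e_E(1) u(1)] e_E(2) by simp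
  qed
qed (auto intro: incident_edges_butlast_appendI1 incident_edges_butlast_appendI2)

lemma incident_product_split_last_edge:
  "(\<Prod>e\<in>incident_edges E h. q_path q e h) =
     q (last (path_edge_list c)) (last c) *
     (\<Prod>e\<in>incident_edges E h - {last (path_edge_list c)}. q_path q e h)"
proof -
  let ?en = "last (path_edge_list c)"
  have en_c: "?en \<in> set (path_edge_list c)" "last c \<in> ?en"
    using c(2) path_edge_list_ends[of c] unfolding linear_path_def by auto
  moreover have "distinct (path_edge_list (butlast c @ h))" using g unfolding is_path_def by simp
  ultimately have en: "?en \<in> incident_edges E h" "last c \<in> set h"
    using c(1) butlast_append_cells(1,3) unfolding is_path_def incident_edges_def path_edges_def
    by auto
  have "finite (incident_edges E h)" using tree unfolding is_tree_def is_graph_def incident_edges_def by simp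
  then show ?thesis
    using prod.remove[OF _ en(1), of "\<lambda>e. q_path q e h"] q_path_eq[OF tree h(1) en(1) en_c(2) en(2), of q]
    by simp
qed

lemma incident_products_butlast_append:
  fixes q :: "'a set \<Rightarrow> 'a \<Rightarrow> int"
  defines "R \<equiv> \<Prod>e\<in>incident_edges E h - {last (path_edge_list c)}. q_path q e h"
  shows "(\<Prod>e\<in>incident_edges E (butlast c @ h). q_path q e (butlast c @ h)) =
           QQ E q (hd (path_edge_list c)) (hd c) * R"
    and "(\<Prod>e\<in>{e \<in> incident_edges E (butlast c @ h). hd c \<notin> e}. q_path q e (butlast c @ h)) = R"
proof -
  let ?g = "butlast c @ h" and ?e1 = "hd (path_edge_list c)" and ?en = "last (path_edge_list c)"
  define S1 where "S1 = {e \<in> E. hd c \<in> e \<and> e \<noteq> ?e1}"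
  define S2 where "S2 = incident_edges E h - {?en}"
  note split = incident_edges_butlast_append[folded S1_def S2_def]
  note cells = butlast_append_cells
  have fin: "finite S1" "finite S2"
    using tree unfolding is_tree_def is_graph_def S1_def S2_def incident_edges_def by auto
  have S2_avoids: "hd c \<notin> e" if "e \<in> S2" for e
    using butlast_append_incident_edge_at_hd that unfolding S2_def by blast
  then have disj: "S1 \<inter> S2 = {}" unfolding S1_def by blast
  have "q_path q e ?g = q_path q e h" if "e \<in> S2" for e
    using q_path_eq_subpath[OF tree g h(1)] that split cells(2) unfolding S2_def by blast
  then have S2_prod: "(\<Prod>e\<in>S2. q_path q e ?g) = R"
    unfolding R_def S2_def by (rule prod.cong[OF refl])
  moreover have "{e \<in> incident_edges E ?g. hd c \<notin> e} = S2"
    using split S2_avoids unfolding S1_def by blast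
  ultimately show "(\<Prod>e\<in>{e \<in> incident_edges E ?g. hd c \<notin> e}. q_path q e ?g) = R" by simp
  have "q_path q e ?g = q e (hd c)" if e: "e \<in> S1" for e
  proof (rule q_path_eq[OF tree g])
    show "e \<in> incident_edges E ?g" "hd c \<in> e" "hd c \<in> set ?g"
      using e split cells(2) c(1) unfolding S1_def is_path_def by auto
  qed
  then have "(\<Prod>e\<in>S1. q_path q e ?g) = (\<Prod>e\<in>S1. q e (hd c))" by (rule prod.cong[OF refl])
  also have "\<dots> = QQ E q ?e1 (hd c)" unfolding QQ_def S1_def ..
  finally have S1_prod: "(\<Prod>e\<in>S1. q_path q e ?g) = QQ E q ?e1 (hd c)" .
  have "(\<Prod>e\<in>incident_edges E ?g. q_path q e ?g) = (\<Prod>e\<in>S1. q_path q e ?g) * (\<Prod>e\<in>S2. q_path q e ?g)"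
    unfolding split by (rule prod.union_disjoint[OF fin(1,2) disj])
  then show "(\<Prod>e\<in>incident_edges E ?g. q_path q e ?g) = QQ E q ?e1 (hd c) * R"
    using S1_prod S2_prod by simp
qed

end

lemma det_path_eq:
  assumes "length p \<ge> 2"
  shows "det_path E q p =
    q (hd (path_edge_list p)) (hd p) * q (last (path_edge_list p)) (last p) -
    QQ E q (hd (path_edge_list p)) (hd p) * QQ E q (last (path_edge_list p)) (last p)"
proof -
  have "p \<noteq> []" "length p - 1 - 1 = length p - 2" using assms by auto
  then show ?thesis
    unfolding det_path_def Let_def hd_path_edge_list[OF assms] last_path_edge_list[OF assms]
    by (simp add: hd_conv_nth last_conv_nth)
qed

lemma tree_linear_path_incident_products:
  fixes q :: "'a set \<Rightarrow> 'a \<Rightarrow> int"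
  assumes T: "is_tree X E" and P: "is_path X E c" and L: "linear_path E c"
    and \<alpha>: "\<alpha> \<in> X" "\<alpha> \<notin> set c"
  defines "g \<equiv> gam X E (hd c) \<alpha>" and "h \<equiv> gam X E (last c) \<alpha>"
    and "e1 \<equiv> hd (path_edge_list c)" and "en \<equiv> last (path_edge_list c)"
  shows "q e1 (hd c) * (\<Prod>e\<in>incident_edges E h. q_path q e h) -
           QQ E q en (last c) * (\<Prod>e\<in>incident_edges E g. q_path q e g) =
         (if e1 \<in> path_edges g
          then det_path E q c * (\<Prod>e\<in>{e \<in> incident_edges E g. hd c \<notin> e}. q_path q e g)
          else 0)"
proof -
  have c: "c \<noteq> []" "hd c \<in> X" "last c \<in> X" "length c \<ge> 2"
    using P L unfolding is_path_def linear_path_def by auto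
  have g: "is_path X E g" "hd g = hd c" "g \<noteq> []" and h: "is_path X E h" "hd h = last c" "h \<noteq> []"
    using is_path_gam[OF T _ \<alpha>(1)] c unfolding g_def h_def is_path_def by auto
  have e1: "e1 \<in> set (path_edge_list c)" "hd (path_edge_list (rev c)) = en"
    "last (path_edge_list (rev c)) = e1"
    using c(4) unfolding e1_def en_def
    by (auto simp: path_edge_list_eq_Nil_iff path_edge_list_rev hd_rev last_rev)
  from tree_linear_path_gam_cases[OF T P L \<alpha>] show ?thesis
  proof cases
    case 1
    then have g_eq: "g = butlast c @ h" unfolding g_def h_def .
    then have "path_edge_list g = path_edge_list c @ path_edge_list h"
      using path_edge_list_butlast_append[OF c(1) h(3) h(2)[symmetric]] by simp
    then have "e1 \<in> path_edges g" using e1(1) unfolding path_edges_def by simp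
    moreover note incident_products_butlast_append[OF T P L h(1,2) g(1)[unfolded g_eq],
        folded g_eq e1_def en_def]
      and incident_product_split_last_edge[OF T P L h(1,2) g(1)[unfolded g_eq], of q, folded en_def]
    ultimately show ?thesis unfolding det_path_eq[OF c(4)] e1_def en_def
      by (simp add: algebra_simps)
  next
    case 2
    then have h_eq: "h = butlast (rev c) @ g" unfolding g_def h_def .
    then have "path_edge_list h = path_edge_list (rev c) @ path_edge_list g"
      using path_edge_list_butlast_append[of "rev c" g] c(1) g(2,3) by (simp add: last_rev)
    then have "e1 \<notin> path_edges g"
      using h(1) e1 unfolding is_path_def path_edges_def by (auto simp: path_edge_list_rev)
    moreover have "hd g = last (rev c)" using g(2) c(1) by (simp add: last_rev)
    note incident_products_butlast_append[OF T is_path_rev[OF P] linear_path_rev[OF L] g(1) this,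
        folded h_eq, unfolded e1(2,3) hd_rev last_rev]
      and incident_product_split_last_edge[OF T is_path_rev[OF P] linear_path_rev[OF L] g(1) this,
        folded h_eq, unfolded e1(3) last_rev, of q]
    ultimately show ?thesis using h(1) by (simp add: algebra_simps)
  qed
qed

subsection \<open>Decorated trees\<close>

lemma xx_linear_path_combination:
  assumes "is_tree (V \<union> A) E" "is_path (V \<union> A) E c" "linear_path E c" "\<alpha> \<in> V \<union> A" "\<alpha> \<notin> set c"
  shows "q (hd (path_edge_list c)) (hd c) * xx V A E f q (last c) \<alpha> -
           QQ E q (last (path_edge_list c)) (last c) * xx V A E f q (hd c) \<alpha> =
         (if hd (path_edge_list c) \<in> path_edges (gam (V \<union> A) E (hd c) \<alpha>)
          then det_path E q c * xx_hat V A E f q (hd c) \<alpha> else 0)"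
  using arg_cong[OF tree_linear_path_incident_products[OF assms, of q], of "\<lambda>x. f \<alpha> * x"]
  unfolding xx_def xx_hat_def Let_def by (simp add: algebra_simps)

lemma NN_combination_eq_pp:
  assumes "finite A"
    and "\<And>\<alpha>. \<alpha> \<in> A - A0 A f \<Longrightarrow> a * xx V A E f q v' \<alpha> - b * xx V A E f q v \<alpha> =
           (if e \<in> path_edges (gam (V \<union> A) E v \<alpha>) then d * xx_hat V A E f q v \<alpha> else 0)"
  shows "a * NN V A E f q v' - b * NN V A E f q v = d * pp V A E f q v e"
proof -
  have "a * NN V A E f q v' - b * NN V A E f q v =
        (\<Sum>\<alpha>\<in>A - A0 A f. a * xx V A E f q v' \<alpha> - b * xx V A E f q v \<alpha>)"
    unfolding NN_def by (simp add: sum_distrib_left sum_subtractf)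
  also have "\<dots> = (\<Sum>\<alpha>\<in>A - A0 A f.
      if e \<in> path_edges (gam (V \<union> A) E v \<alpha>) then d * xx_hat V A E f q v \<alpha> else 0)"
    using assms(2) by (rule sum.cong[OF refl])
  also have "\<dots> = (\<Sum>\<alpha>\<in>{\<alpha> \<in> A - A0 A f. e \<in> path_edges (gam (V \<union> A) E v \<alpha>)}.
      d * xx_hat V A E f q v \<alpha>)"
    using assms(1) by (intro sum.inter_filter[symmetric]) simp
  also have "\<dots> = d * pp V A E f q v e"
    unfolding pp_def by (simp add: sum_distrib_left)
  finally show ?thesis .
qed

lemma arrow_not_on_linear_path:
  assumes "decorated_tree V A E f q" "linear_path E c"
    and "hd c \<in> V \<union> A0 A f" "last c \<in> V \<union> A0 A f" "\<alpha> \<in> A - A0 A f"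
  shows "\<alpha> \<notin> set c"
proof
  assume "\<alpha> \<in> set c"
  moreover have "\<alpha> \<noteq> hd c" "\<alpha> \<noteq> last c"
    using assms(1,3-5) unfolding decorated_tree_def by auto
  ultimately have "valency E \<alpha> = 2" using linear_path_valency[OF assms(2)] by blast
  then show False using assms(1,5) unfolding decorated_tree_def by auto
qed

theorem proposition1p21:
  fixes V A :: "'a set" and E :: "'a set set" and f :: "'a \<Rightarrow> int"
    and q :: "'a set \<Rightarrow> 'a \<Rightarrow> int" and v v' :: 'a
  assumes "decorated_tree V A E f q"
    and "v \<in> V \<union> A0 A f" and "v' \<in> V \<union> A0 A f" and "v \<noteq> v'"
    and "linear_path E (gam (V \<union> A) E v v')"
  shows "(let \<gamma> = gam (V \<union> A) E v v'; n = length \<gamma> - 1;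
             e1 = {\<gamma> ! 0, \<gamma> ! 1}; en = {\<gamma> ! (n - 1), \<gamma> ! n} in
          q e1 v * NN V A E f q v' - QQ E q en v' * NN V A E f q v
            = det_path E q \<gamma> * pp V A E f q v e1)"
proof -
  define \<gamma> where "\<gamma> = gam (V \<union> A) E v v'"
  have T: "is_tree (V \<union> A) E" and "finite A" using assms(1) unfolding decorated_tree_def by auto
  have "v \<in> V \<union> A" "v' \<in> V \<union> A" using assms(2,3) unfolding A0_def by auto
  then have P: "is_path (V \<union> A) E \<gamma>" "hd \<gamma> = v" "last \<gamma> = v'"
    using is_path_gam[OF T] unfolding \<gamma>_def by auto
  have L: "linear_path E \<gamma>" using assms(5) unfolding \<gamma>_def .
  then have "length \<gamma> \<ge> 2" unfolding linear_path_def by simp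
  then have e1: "{\<gamma> ! 0, \<gamma> ! 1} = hd (path_edge_list \<gamma>)"
    and en: "{\<gamma> ! (length \<gamma> - 1 - 1), \<gamma> ! (length \<gamma> - 1)} = last (path_edge_list \<gamma>)"
    using hd_path_edge_list last_path_edge_list by (auto simp: numeral_2_eq_2)
  have "q (hd (path_edge_list \<gamma>)) v * NN V A E f q v' - QQ E q (last (path_edge_list \<gamma>)) v' * NN V A E f q v
      = det_path E q \<gamma> * pp V A E f q v (hd (path_edge_list \<gamma>))"
    using xx_linear_path_combination[OF T P(1) L] arrow_not_on_linear_path[OF assms(1) L] P assms(2,3)
    by (intro NN_combination_eq_pp[OF \<open>finite A\<close>]) auto
  then show ?thesis unfolding Let_def \<gamma>_def[symmetric] e1 en .
qed

end
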